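(* For every $d\in\mathbb{N}$, the cones $\mathfrak{P}_{2d}$ and $\mathfrak{S}_{2d}$ are full-dimensional cones in $\mathbb{R}^{\pi(2d)}$.
   Context: For $n\ge 1$, $i\ge1$ let $p_i^{(n)}=\frac1n(x_1^i+\dots+x_n^i)$, and for a partition $\lambda=(\lambda_1,\dots,\lambda_l)$ of $k$ (weakly decreasing positive integers summing to $k$) let $p^{(n)}_\lambda=\prod_i p^{(n)}_{\lambda_i}$. $\pi(k)$ is the number of partitions of $k$. For $n\ge 2d$, $\{p^{(n)}_\lambda:\lambda\vdash 2d\}$ is a basis of the space $H^S_{n,2d}$ of symmetric forms of degree $2d$ in $n$ variables, which identifies $H^S_{n,2d}$ with $\mathbb{R}^{\pi(2d)}$. Define $\mathfrak{P}_{2d}$ (resp. $\mathfrak{S}_{2d}$) as the set of $(c_\lambda)_{\lambda\vdash 2d}\in\mathbb{R}^{\pi(2d)}$ such that $\sum_\lambda c_\lambda p^{(n)}_\lambda$ is a nonnegative form (resp. a sum of squares of real forms) for every $n\ge 2d$. *)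

theory Defs
  imports Main "HOL-Analysis.Analysis"
begin

definition is_partition :: "nat \<Rightarrow> nat list \<Rightarrow> bool" where
  "is_partition k lam \<longleftrightarrow> sorted_wrt (\<ge>) lam \<and> (\<forall>i\<in>set lam. 0 < i) \<and> sum_list lam = k"

definition partitions :: "nat \<Rightarrow> nat list set" where
  "partitions k = {lam. is_partition k lam}"

(* normalized power sum p_i^(n)(x) = (1/n)(x_0^i + ... + x_{n-1}^i);
   points of R^n are x :: nat => real, only coordinates 0..n-1 are used *)
definition psum :: "nat \<Rightarrow> nat \<Rightarrow> (nat \<Rightarrow> real) \<Rightarrow> real" where
  "psum n i x = (1 / real n) * (\<Sum>j<n. x j ^ i)"

definition pprod :: "nat \<Rightarrow> nat list \<Rightarrow> (nat \<Rightarrow> real) \<Rightarrow> real" where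
  "pprod n lam x = prod_list (map (\<lambda>i. psum n i x) lam)"

definition sym_form :: "nat \<Rightarrow> nat \<Rightarrow> (nat list \<Rightarrow> real) \<Rightarrow> (nat \<Rightarrow> real) \<Rightarrow> real" where
  "sym_form k n c x = (\<Sum>lam\<in>partitions k. c lam * pprod n lam x)"

(* coefficient vectors in R^{pi(k)}: functions on partitions of k, zero elsewhere *)
definition coeff_space :: "nat \<Rightarrow> (nat list \<Rightarrow> real) set" where
  "coeff_space k = {c. \<forall>lam. lam \<notin> partitions k \<longrightarrow> c lam = 0}"

definition monomial_exps :: "nat \<Rightarrow> nat \<Rightarrow> (nat \<Rightarrow> nat) set" where
  "monomial_exps n d = {a. (\<forall>i\<ge>n. a i = 0) \<and> (\<Sum>i<n. a i) = d}"

definition is_form :: "nat \<Rightarrow> nat \<Rightarrow> ((nat \<Rightarrow> real) \<Rightarrow> real) \<Rightarrow> bool" where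
  "is_form n d q \<longleftrightarrow> (\<exists>coef :: (nat \<Rightarrow> nat) \<Rightarrow> real.
      q = (\<lambda>x. \<Sum>a\<in>monomial_exps n d. coef a * (\<Prod>i<n. x i ^ a i)))"

definition nonneg_fn :: "nat \<Rightarrow> ((nat \<Rightarrow> real) \<Rightarrow> real) \<Rightarrow> bool" where
  "nonneg_fn n f \<longleftrightarrow> (\<forall>x. f x \<ge> 0)"

definition is_sos :: "nat \<Rightarrow> nat \<Rightarrow> ((nat \<Rightarrow> real) \<Rightarrow> real) \<Rightarrow> bool" where
  "is_sos n d f \<longleftrightarrow> (\<exists>qs. (\<forall>q\<in>set qs. is_form n d q) \<and>
      (\<forall>x. f x = (\<Sum>q\<leftarrow>qs. (q x)\<^sup>2)))"

definition Pcone :: "nat \<Rightarrow> (nat list \<Rightarrow> real) set" where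
  "Pcone d = {c \<in> coeff_space (2*d).
      \<forall>n. n \<ge> 1 \<and> n \<ge> 2*d \<longrightarrow> nonneg_fn n (sym_form (2*d) n c)}"

definition Scone :: "nat \<Rightarrow> (nat list \<Rightarrow> real) set" where
  "Scone d = {c \<in> coeff_space (2*d).
      \<forall>n. n \<ge> 1 \<and> n \<ge> 2*d \<longrightarrow> is_sos n d (sym_form (2*d) n c)}"

definition is_cone_in :: "(nat list \<Rightarrow> real) set \<Rightarrow> bool" where
  "is_cone_in C \<longleftrightarrow> (\<forall>c\<in>C. \<forall>t::real. t \<ge> 0 \<longrightarrow> (\<lambda>lam. t * c lam) \<in> C)"

(* full-dimensional in R^{pi(k)}: nonempty interior in the (finite-dim.) coefficient space *)
definition full_dimensional :: "nat \<Rightarrow> (nat list \<Rightarrow> real) set \<Rightarrow> bool" where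
  "full_dimensional k C \<longleftrightarrow> (\<exists>c0\<in>C. \<exists>e>0. \<forall>c\<in>coeff_space k.
      (\<forall>lam\<in>partitions k. \<bar>c lam - c0 lam\<bar> < e) \<longrightarrow> c \<in> C)"

end

theory Submission
  imports Defs
begin

text \<open>
  Expanding products of power sums over all index maps \<open>f : {..<l} \<rightarrow> {..<n}\<close> gives, for
  exponent lists \<open>a\<close>, \<open>b\<close> of length \<open>l\<close> and total degree \<open>d\<close>,
  \<open>n^l (p\<^sub>2\<^sub>a + s\<^sup>2 p\<^sub>2\<^sub>b + 2 s p\<^sub>a\<^sub>+\<^sub>b) = \<Sum>\<^sub>f (x\<^sub>f\<^sup>a + s x\<^sub>f\<^sup>b)\<^sup>2\<close>, so
  \<open>p\<^sub>2\<^sub>a + p\<^sub>2\<^sub>b + 2 t p\<^sub>a\<^sub>+\<^sub>b\<close> is a sum of squares for \<open>\<bar>t\<bar> \<le> 1\<close>, uniformly in \<open>n\<close>.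
  Every partition \<open>\<lambda>\<close> of \<open>2d\<close> splits as \<open>a + b\<close> with both halves of degree \<open>d\<close>, and
  \<open>2a\<close>, \<open>2b\<close> are (after sorting and dropping zeros) even partitions, whose power-sum
  products are themselves sums of squares. Hence perturbing the point that puts weight \<open>2 \<pi>(2d)\<close> on every even partition by
  at most \<open>2\<close> in each coordinate stays a sum of squares: it is an interior point of
  \<open>Scone d \<subseteq> Pcone d\<close>.
\<close>

lemma finite_monomial_exps: "finite (monomial_exps n d)"
proof -
  have "monomial_exps n d \<subseteq> (\<lambda>f i. if i < n then f i else 0) ` ({..<n} \<rightarrow>\<^sub>E {..d})"
  proof
    fix a assume a: "a \<in> monomial_exps n d"
    hence zero: "\<forall>i\<ge>n. a i = 0" and sum: "(\<Sum>i<n. a i) = d"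
      by (auto simp: monomial_exps_def)
    have "\<And>i. i < n \<Longrightarrow> a i \<le> d"
      using sum by (metis finite_lessThan lessThan_iff member_le_sum zero_le)
    hence "restrict a {..<n} \<in> {..<n} \<rightarrow>\<^sub>E {..d}" by auto
    moreover have "a = (\<lambda>i. if i < n then restrict a {..<n} i else 0)"
      using zero by (auto simp: fun_eq_iff not_less)
    ultimately show "a \<in> (\<lambda>f i. if i < n then f i else 0) ` ({..<n} \<rightarrow>\<^sub>E {..d})" by blast
  qed
  thus ?thesis by (rule finite_subset) (intro finite_imageI finite_PiE; simp)
qed

lemma is_form_add:
  assumes "is_form n d p" and "is_form n d q"
  shows "is_form n d (\<lambda>x. p x + q x)"
proof -
  obtain cp cq where "p = (\<lambda>x. \<Sum>a\<in>monomial_exps n d. cp a * (\<Prod>i<n. x i ^ a i))"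
    and "q = (\<lambda>x. \<Sum>a\<in>monomial_exps n d. cq a * (\<Prod>i<n. x i ^ a i))"
    using assms unfolding is_form_def by blast
  then show ?thesis unfolding is_form_def
    by (intro exI[of _ "\<lambda>a. cp a + cq a"]) (simp add: fun_eq_iff sum.distrib distrib_right)
qed

lemma is_form_cmult:
  assumes "is_form n d p"
  shows "is_form n d (\<lambda>x. c * p x)"
proof -
  obtain cp where "p = (\<lambda>x. \<Sum>a\<in>monomial_exps n d. cp a * (\<Prod>i<n. x i ^ a i))"
    using assms unfolding is_form_def by blast
  then show ?thesis unfolding is_form_def
    by (intro exI[of _ "\<lambda>a. c * cp a"]) (simp add: fun_eq_iff sum_distrib_left mult.assoc)
qed

lemma monomial_exps_0: "monomial_exps n 0 = {\<lambda>_. 0}"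
proof -
  have "a = (\<lambda>_. 0)" if "a \<in> monomial_exps n 0" for a
  proof
    fix i show "a i = 0"
      using that by (cases "i < n") (simp_all add: monomial_exps_def)
  qed
  moreover have "(\<lambda>_. 0) \<in> monomial_exps n 0"
    by (simp add: monomial_exps_def)
  ultimately show ?thesis by blast
qed

lemma is_form_const: "is_form n 0 (\<lambda>x. c)"
  unfolding is_form_def monomial_exps_0 by (rule exI[of _ "\<lambda>_. c"]) simp

lemma monomial_exps_Suc:
  assumes "j < n"
  shows "(\<lambda>a. a(j := Suc (a j))) ` monomial_exps n d = {b \<in> monomial_exps n (Suc d). 0 < b j}"
proof -
  have sum_inc: "(\<Sum>i<n. (a(j := Suc (a j))) i) = Suc (\<Sum>i<n. a i)" for a :: "nat \<Rightarrow> nat"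
    using assms by (simp add: sum.remove[of "{..<n}" j])
  have surj: "b \<in> (\<lambda>a. a(j := Suc (a j))) ` monomial_exps n d"
    if "b \<in> monomial_exps n (Suc d)" "0 < b j" for b
  proof -
    let ?a = "b(j := b j - 1)"
    have inc: "?a(j := Suc (?a j)) = b" using that(2) by (auto simp: fun_eq_iff)
    have "Suc (\<Sum>i<n. ?a i) = Suc d"
      using that(1) by (simp only: sum_inc[of ?a, symmetric] inc) (simp add: monomial_exps_def)
    moreover have "\<forall>i\<ge>n. ?a i = 0"
      using that(1) assms by (simp add: monomial_exps_def)
    ultimately have "?a \<in> monomial_exps n d"
      by (simp add: monomial_exps_def)
    with inc show ?thesis by (intro image_eqI[where x = ?a]) simp_all
  qed
  have "a(j := Suc (a j)) \<in> monomial_exps n (Suc d)" if "a \<in> monomial_exps n d" for a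
    using that assms sum_inc[of a] by (simp add: monomial_exps_def)
  then show ?thesis
    using surj by (intro subset_antisym image_subsetI subsetI CollectI conjI) simp_all
qed

lemma is_form_mult_var:
  assumes q: "is_form n d q" and j: "j < n"
  shows "is_form n (Suc d) (\<lambda>x. x j * q x)"
proof -
  obtain coef where q_eq: "q = (\<lambda>x. \<Sum>a\<in>monomial_exps n d. coef a * (\<Prod>i<n. x i ^ a i))"
    using q by (auto simp: is_form_def)
  define inc where "inc a = a(j := Suc (a j))" for a :: "nat \<Rightarrow> nat"
  define coef' where "coef' b = (if 0 < b j then coef (b(j := b j - 1)) else 0)" for b :: "nat \<Rightarrow> nat"
  have prod_inc: "(\<Prod>i<n. x i ^ inc a i) = x j * (\<Prod>i<n. x i ^ a i)" for x :: "nat \<Rightarrow> real" and a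
    using j by (simp add: inc_def prod.remove[of "{..<n}" j])
  have coef'_inc: "coef' (inc a) = coef a" for a
    by (simp add: coef'_def inc_def)
  have "inj_on inc (monomial_exps n d)"
    by (rule inj_onI) (simp add: inc_def fun_eq_iff, metis nat.inject)
  have "x j * q x = (\<Sum>b\<in>monomial_exps n (Suc d). coef' b * (\<Prod>i<n. x i ^ b i))" for x
  proof -
    have "x j * q x = (\<Sum>a\<in>monomial_exps n d. coef' (inc a) * (\<Prod>i<n. x i ^ inc a i))"
      by (simp add: q_eq sum_distrib_left prod_inc coef'_inc mult.left_commute)
    also have "\<dots> = (\<Sum>b\<in>inc ` monomial_exps n d. coef' b * (\<Prod>i<n. x i ^ b i))"
      by (simp add: sum.reindex[OF \<open>inj_on inc _\<close>])
    also have "\<dots> = (\<Sum>b\<in>monomial_exps n (Suc d). coef' b * (\<Prod>i<n. x i ^ b i))"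
      unfolding inc_def monomial_exps_Suc[OF j]
      by (rule sum.mono_neutral_left) (auto simp: finite_monomial_exps coef'_def)
    finally show ?thesis .
  qed
  then show ?thesis unfolding is_form_def by (intro exI[of _ coef'] ext)
qed

lemma is_form_mult_var_power:
  assumes "is_form n d q" and "j < n"
  shows "is_form n (d + e) (\<lambda>x. x j ^ e * q x)"
proof (induction e)
  case 0 then show ?case using assms(1) by simp
next
  case (Suc e)
  from is_form_mult_var[OF Suc assms(2)] show ?case by (simp add: mult.assoc)
qed

lemma is_form_prod_powers:
  fixes l :: nat
  assumes "\<forall>k<l. f k < n"
  shows "is_form n (\<Sum>k<l. e k) (\<lambda>x. \<Prod>k<l. x (f k) ^ e k)"
  using assms
proof (induction l)
  case 0 then show ?case by (simp add: is_form_const)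
next
  case (Suc l)
  then have "is_form n ((\<Sum>k<l. e k) + e l) (\<lambda>x. x (f l) ^ e l * (\<Prod>k<l. x (f k) ^ e k))"
    by (intro is_form_mult_var_power) auto
  then show ?case by (simp add: mult.commute)
qed

definition index_monomial :: "nat list \<Rightarrow> (nat \<Rightarrow> nat) \<Rightarrow> (nat \<Rightarrow> real) \<Rightarrow> real" where
  "index_monomial a f x = (\<Prod>k<length a. x (f k) ^ (a ! k))"

lemma is_form_index_monomial:
  assumes "\<forall>k<length a. f k < n"
  shows "is_form n (sum_list a) (index_monomial a f)"
  using is_form_prod_powers[OF assms, of "(!) a"]
  by (simp add: index_monomial_def[abs_def] sum_list_sum_nth atLeast0LessThan)

lemma index_monomial_square: "(index_monomial a f x)\<^sup>2 = index_monomial (map ((*) 2) a) f x"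
  by (simp add: index_monomial_def prod_power_distrib power_mult[symmetric] mult.commute)

lemma index_monomial_mult:
  assumes "length b = length a"
  shows "index_monomial a f x * index_monomial b f x = index_monomial (map2 (+) a b) f x"
  using assms by (simp add: index_monomial_def prod.distrib[symmetric] power_add)

lemma pprod_conv_prod: "pprod n a x = (\<Prod>k<length a. psum n (a ! k) x)"
  by (simp add: pprod_def prod.list_conv_set_nth atLeast0LessThan)

lemma pprod_expand:
  assumes "n \<ge> 1"
  shows "real n ^ length a * pprod n a x
    = (\<Sum>f\<in>{..<length a} \<rightarrow>\<^sub>E {..<n}. index_monomial a f x)"
proof -
  have "real n ^ length a * pprod n a x = (\<Prod>k<length a. real n * psum n (a ! k) x)"
    by (simp add: pprod_conv_prod prod.distrib)
  also have "\<dots> = (\<Prod>k<length a. \<Sum>j<n. x j ^ (a ! k))"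
    using assms by (simp add: psum_def)
  also have "\<dots> = (\<Sum>f\<in>{..<length a} \<rightarrow>\<^sub>E {..<n}. index_monomial a f x)"
    unfolding index_monomial_def by (rule prod_sum_PiE) auto
  finally show ?thesis .
qed

lemma pprod_binomial_eq_sum_squares:
  assumes n: "n \<ge> 1" and len: "length b = length a"
  shows "real n ^ length a * (pprod n (map ((*) 2) a) x + s\<^sup>2 * pprod n (map ((*) 2) b) x
      + 2 * s * pprod n (map2 (+) a b) x)
    = (\<Sum>f\<in>{..<length a} \<rightarrow>\<^sub>E {..<n}. (index_monomial a f x + s * index_monomial b f x)\<^sup>2)"
proof -
  let ?F = "{..<length a} \<rightarrow>\<^sub>E {..<n}"
  have expand: "real n ^ length a * pprod n c x = (\<Sum>f\<in>?F. index_monomial c f x)"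
    if "length c = length a" for c
    using pprod_expand[OF n, of c x] that by simp
  have "(index_monomial a f x + s * index_monomial b f x)\<^sup>2 = index_monomial (map ((*) 2) a) f x
      + s\<^sup>2 * index_monomial (map ((*) 2) b) f x + 2 * s * index_monomial (map2 (+) a b) f x" for f
    using len by (simp add: power2_sum power_mult_distrib index_monomial_square
        index_monomial_mult[symmetric] algebra_simps)
  then have "(\<Sum>f\<in>?F. (index_monomial a f x + s * index_monomial b f x)\<^sup>2)
      = (\<Sum>f\<in>?F. index_monomial (map ((*) 2) a) f x) + s\<^sup>2 * (\<Sum>f\<in>?F. index_monomial (map ((*) 2) b) f x)
        + 2 * s * (\<Sum>f\<in>?F. index_monomial (map2 (+) a b) f x)"
    by (simp add: sum.distrib sum_distrib_left)
  also have "\<dots> = real n ^ length a * (pprod n (map ((*) 2) a) x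
      + s\<^sup>2 * pprod n (map ((*) 2) b) x + 2 * s * pprod n (map2 (+) a b) x)"
    using len by (simp add: expand[symmetric] algebra_simps)
  finally show ?thesis by simp
qed

lemma is_sos_zero: "is_sos n d (\<lambda>x. 0)"
  unfolding is_sos_def by (rule exI[of _ "[]"]) simp

lemma is_sos_add:
  assumes "is_sos n d f" and "is_sos n d g"
  shows "is_sos n d (\<lambda>x. f x + g x)"
proof -
  obtain ps qs where "\<forall>q\<in>set ps. is_form n d q" "\<forall>x. f x = (\<Sum>q\<leftarrow>ps. (q x)\<^sup>2)"
    and "\<forall>q\<in>set qs. is_form n d q" "\<forall>x. g x = (\<Sum>q\<leftarrow>qs. (q x)\<^sup>2)"
    using assms unfolding is_sos_def by blast
  then show ?thesis unfolding is_sos_def by (intro exI[of _ "ps @ qs"]) auto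
qed

lemma is_sos_square: "is_form n d q \<Longrightarrow> is_sos n d (\<lambda>x. (q x)\<^sup>2)"
  unfolding is_sos_def by (rule exI[of _ "[q]"]) simp

lemma is_sos_cmult:
  assumes "0 \<le> c" and "is_sos n d f"
  shows "is_sos n d (\<lambda>x. c * f x)"
proof -
  obtain qs where "\<forall>q\<in>set qs. is_form n d q" "\<forall>x. f x = (\<Sum>q\<leftarrow>qs. (q x)\<^sup>2)"
    using assms(2) unfolding is_sos_def by blast
  then show ?thesis unfolding is_sos_def using assms(1)
    by (intro exI[of _ "map (\<lambda>q x. sqrt c * q x) qs"])
      (auto simp: is_form_cmult power_mult_distrib sum_list_const_mult o_def)
qed

lemma is_sos_sum:
  "finite A \<Longrightarrow> (\<And>i. i \<in> A \<Longrightarrow> is_sos n d (f i)) \<Longrightarrow> is_sos n d (\<lambda>x. \<Sum>i\<in>A. f i x)"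
  by (induction A rule: finite_induct) (simp_all add: is_sos_zero is_sos_add)

lemma is_sos_imp_nonneg: "is_sos n d f \<Longrightarrow> nonneg_fn n f"
  unfolding is_sos_def nonneg_fn_def by (auto intro!: sum_list_nonneg)

lemma is_sos_pprod_binomial:
  assumes n: "n \<ge> 1" and len: "length b = length a"
    and sum_a: "sum_list a = d" and sum_b: "sum_list b = d"
  shows "is_sos n d (\<lambda>x. pprod n (map ((*) 2) a) x + s\<^sup>2 * pprod n (map ((*) 2) b) x
    + 2 * s * pprod n (map2 (+) a b) x)"
proof -
  let ?F = "{..<length a} \<rightarrow>\<^sub>E {..<n}"
  have "is_form n d (index_monomial c f)" if "f \<in> ?F" "length c = length a" "sum_list c = d" for c f
    using that is_form_index_monomial[of c f n] by auto
  then have "is_sos n d (\<lambda>x. \<Sum>f\<in>?F. (index_monomial a f x + s * index_monomial b f x)\<^sup>2)"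
    using len sum_a sum_b
    by (intro is_sos_sum is_sos_square is_form_add is_form_cmult) (auto simp: finite_PiE)
  then have "is_sos n d (\<lambda>x. 1 / real n ^ length a
      * (\<Sum>f\<in>?F. (index_monomial a f x + s * index_monomial b f x)\<^sup>2))"
    by (rule is_sos_cmult[rotated]) simp
  then show ?thesis
    using n by (simp add: pprod_binomial_eq_sum_squares[OF n len, symmetric])
qed

lemma is_sos_pprod_pair:
  assumes n: "n \<ge> 1" and len: "length b = length a"
    and sum_a: "sum_list a = d" and sum_b: "sum_list b = d" and t: "\<bar>t\<bar> \<le> 1"
  shows "is_sos n d (\<lambda>x. pprod n (map ((*) 2) a) x + pprod n (map ((*) 2) b) x
    + 2 * t * pprod n (map2 (+) a b) x)"
proof -
  let ?A = "pprod n (map ((*) 2) a)" and ?B = "pprod n (map ((*) 2) b)" and ?C = "pprod n (map2 (+) a b)"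
  have plus: "is_sos n d (\<lambda>x. ?A x + 1\<^sup>2 * ?B x + 2 * 1 * ?C x)"
    and minus: "is_sos n d (\<lambda>x. ?A x + (-1)\<^sup>2 * ?B x + 2 * (-1) * ?C x)"
    by (rule is_sos_pprod_binomial[OF n len sum_a sum_b])+
  have "is_sos n d (\<lambda>x. (1 + t) / 2 * (?A x + 1\<^sup>2 * ?B x + 2 * 1 * ?C x)
      + (1 - t) / 2 * (?A x + (-1)\<^sup>2 * ?B x + 2 * (-1) * ?C x))"
    by (rule is_sos_add[OF is_sos_cmult[OF _ plus] is_sos_cmult[OF _ minus]]) (use t in auto)
  moreover have "(1 + t) / 2 * (A + 1\<^sup>2 * B + 2 * 1 * C) + (1 - t) / 2 * (A + (-1)\<^sup>2 * B + 2 * (-1) * C)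
      = A + B + 2 * t * C" for A B C :: real
    by (simp add: field_simps)
  ultimately show ?thesis by simp
qed

lemma finite_partitions: "finite (partitions k)"
proof -
  have "length c \<le> sum_list c" if "\<forall>i\<in>set c. 0 < i" for c :: "nat list"
    using that by (induction c) auto
  then have "partitions k \<subseteq> {c. set c \<subseteq> {..k} \<and> length c \<le> k}"
    by (auto simp: partitions_def is_partition_def member_le_sum_list)
  then show ?thesis by (rule finite_subset) (simp add: finite_lists_length_le)
qed

definition even_partitions :: "nat \<Rightarrow> nat list set" where
  "even_partitions d = {rho \<in> partitions (2 * d). \<forall>r\<in>set rho. even r}"

lemma is_sos_pprod_even_partition:
  assumes n: "n \<ge> 1" and rho: "rho \<in> even_partitions d"
  shows "is_sos n d (pprod n rho)"
proof -
  define h where "h = map (\<lambda>r. r div 2) rho"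
  have double: "map ((*) 2) h = rho"
    using rho by (auto simp: h_def even_partitions_def intro: map_idI)
  have "sum_list rho = 2 * sum_list h"
    unfolding double[symmetric] by (induction h) auto
  then have "sum_list h = d"
    using rho by (simp add: even_partitions_def partitions_def is_partition_def)
  then have "is_sos n d (\<lambda>x. pprod n (map ((*) 2) h) x + 0\<^sup>2 * pprod n (map ((*) 2) h) x
      + 2 * 0 * pprod n (map2 (+) h h) x)"
    by (intro is_sos_pprod_binomial[OF n]) simp_all
  then show ?thesis by (simp add: double)
qed

definition partition_of :: "nat list \<Rightarrow> nat list" where
  "partition_of g = rev (sort (filter (\<lambda>e. e \<noteq> 0) g))"

lemma set_partition_of: "set (partition_of g) = set g - {0}"
  by (auto simp: partition_of_def)

lemma partition_of_in_partitions: "partition_of g \<in> partitions (sum_list g)"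
proof -
  have "sum_list (partition_of g) = sum_list (filter (\<lambda>e. e \<noteq> 0) g)"
    by (simp add: partition_of_def sum_mset_sum_list[symmetric])
  also have "\<dots> = sum_list g"
    by (induction g) auto
  finally show ?thesis
    by (auto simp: partitions_def is_partition_def set_partition_of partition_of_def sorted_wrt_rev)
qed

text \<open>Zero parts contribute \<open>psum n 0 = 1\<close>, which needs \<open>n \<ge> 1\<close> (for \<open>n = 0\<close>, \<open>1 / 0 = 0\<close>).\<close>

lemma pprod_partition_of:
  assumes "n \<ge> 1"
  shows "pprod n (partition_of g) x = pprod n g x"
proof -
  have "pprod n (partition_of g) x = pprod n (filter (\<lambda>e. e \<noteq> 0) g) x"
    unfolding pprod_def partition_of_def
    by (simp only: prod_mset_prod_list[symmetric] mset_map mset_rev mset_sort)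
  also have "\<dots> = pprod n g x"
    using assms by (induction g) (auto simp: pprod_def psum_def)
  finally show ?thesis .
qed

lemma partition_of_double:
  assumes "sum_list h = d"
  shows "partition_of (map ((*) 2) h) \<in> even_partitions d"
proof -
  have "sum_list (map ((*) 2) h) = 2 * d"
    using assms by (induction h arbitrary: d) auto
  then show ?thesis
    using partition_of_in_partitions[of "map ((*) 2) h"]
    by (auto simp: even_partitions_def set_partition_of)
qed

lemma sum_list_split:
  fixes c :: "nat list"
  shows "k \<le> sum_list c \<Longrightarrow> \<exists>a b. length a = length c \<and> length b = length c \<and>
     map2 (+) a b = c \<and> sum_list a = k \<and> sum_list b = sum_list c - k"
proof (induction c arbitrary: k)
  case Nil then show ?case by simp
next
  case (Cons h c)
  define a0 where "a0 = min h k"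
  have "k - a0 \<le> sum_list c" using Cons.prems by (auto simp: a0_def)
  from Cons.IH[OF this] obtain a b where ab: "length a = length c" "length b = length c"
    "map2 (+) a b = c" "sum_list a = k - a0" "sum_list b = sum_list c - (k - a0)" by blast
  show ?case
    by (rule exI[of _ "a0 # a"], rule exI[of _ "(h - a0) # b"])
      (use ab Cons.prems in \<open>auto simp: a0_def\<close>)
qed

lemma partition_dominated_by_even:
  assumes "lam \<in> partitions (2 * d)"
  obtains mu nu where "mu \<in> even_partitions d" and "nu \<in> even_partitions d"
    and "\<And>n t. n \<ge> 1 \<Longrightarrow> \<bar>t\<bar> \<le> 1 \<Longrightarrow>
      is_sos n d (\<lambda>x. pprod n mu x + pprod n nu x + 2 * t * pprod n lam x)"
proof -
  have "sum_list lam = 2 * d"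
    using assms by (simp add: partitions_def is_partition_def)
  then obtain a b where ab: "length a = length lam" "length b = length lam" "map2 (+) a b = lam"
    "sum_list a = d" "sum_list b = d"
    using sum_list_split[of d lam] by auto
  show thesis
  proof
    show "partition_of (map ((*) 2) a) \<in> even_partitions d"
      and "partition_of (map ((*) 2) b) \<in> even_partitions d"
      using ab by (simp_all add: partition_of_double)
    fix n :: nat and t :: real assume "n \<ge> 1" "\<bar>t\<bar> \<le> 1"
    with ab show "is_sos n d (\<lambda>x. pprod n (partition_of (map ((*) 2) a)) x
        + pprod n (partition_of (map ((*) 2) b)) x + 2 * t * pprod n lam x)"
      using is_sos_pprod_pair[of n b a d t] by (simp add: pprod_partition_of)
  qed
qed

definition even_center :: "nat \<Rightarrow> nat list \<Rightarrow> real" where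
  "even_center d lam = (if lam \<in> even_partitions d then 2 * real (card (partitions (2 * d))) else 0)"

lemma even_center_in_coeff_space: "even_center d \<in> coeff_space (2 * d)"
  by (simp add: coeff_space_def even_center_def even_partitions_def)

lemma sym_form_even_center:
  "sym_form (2 * d) n (even_center d) x
    = 2 * real (card (partitions (2 * d))) * (\<Sum>rho\<in>even_partitions d. pprod n rho x)"
proof -
  let ?w = "2 * real (card (partitions (2 * d)))"
  have "sym_form (2 * d) n (even_center d) x
      = (\<Sum>lam\<in>partitions (2 * d). if lam \<in> even_partitions d then ?w * pprod n lam x else 0)"
    unfolding sym_form_def by (rule sum.cong) (simp_all add: even_center_def)
  also have "\<dots> = (\<Sum>lam\<in>partitions (2 * d) \<inter> even_partitions d. ?w * pprod n lam x)"
    by (simp add: sum.inter_restrict finite_partitions)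
  also have "partitions (2 * d) \<inter> even_partitions d = even_partitions d"
    by (auto simp: even_partitions_def)
  finally show ?thesis by (simp add: sum_distrib_left)
qed

lemma even_partitions_dominate:
  obtains mu nu where "\<And>lam. lam \<in> partitions (2 * d) \<Longrightarrow> mu lam \<in> even_partitions d"
    and "\<And>lam. lam \<in> partitions (2 * d) \<Longrightarrow> nu lam \<in> even_partitions d"
    and "\<And>lam n t. lam \<in> partitions (2 * d) \<Longrightarrow> n \<ge> 1 \<Longrightarrow> \<bar>t\<bar> \<le> 1 \<Longrightarrow>
      is_sos n d (\<lambda>x. pprod n (mu lam) x + pprod n (nu lam) x + 2 * t * pprod n lam x)"
proof -
  let ?dominating = "\<lambda>lam mu nu. mu \<in> even_partitions d \<and> nu \<in> even_partitions d \<and>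
    (\<forall>n t. n \<ge> 1 \<longrightarrow> \<bar>t\<bar> \<le> 1 \<longrightarrow>
      is_sos n d (\<lambda>x. pprod n mu x + pprod n nu x + 2 * t * pprod n lam x))"
  have "\<forall>lam\<in>partitions (2 * d). \<exists>mu nu. ?dominating lam mu nu"
  proof
    fix lam assume "lam \<in> partitions (2 * d)"
    then obtain mu nu where "mu \<in> even_partitions d" and "nu \<in> even_partitions d"
      and "\<And>n t. n \<ge> 1 \<Longrightarrow> \<bar>t\<bar> \<le> 1 \<Longrightarrow>
        is_sos n d (\<lambda>x. pprod n mu x + pprod n nu x + 2 * t * pprod n lam x)"
      by (rule partition_dominated_by_even) blast
    then show "\<exists>mu nu. ?dominating lam mu nu" by blast
  qed
  then obtain mu where "\<forall>lam\<in>partitions (2 * d). \<exists>nu. ?dominating lam (mu lam) nu"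
    by (rule bchoice[THEN exE])
  then obtain nu where "\<forall>lam\<in>partitions (2 * d). ?dominating lam (mu lam) (nu lam)"
    by (rule bchoice[THEN exE])
  then show thesis using that by blast
qed

lemma is_sos_even_partitions_remove:
  assumes "n \<ge> 1" and "rho \<in> even_partitions d"
  shows "is_sos n d (\<lambda>x. (\<Sum>r\<in>even_partitions d. pprod n r x) - pprod n rho x)"
proof -
  have finite: "finite (even_partitions d)"
    using finite_partitions[of "2 * d"] by (simp add: even_partitions_def)
  have "is_sos n d (\<lambda>x. \<Sum>r\<in>even_partitions d - {rho}. pprod n r x)"
    using finite assms(1) by (intro is_sos_sum is_sos_pprod_even_partition) auto
  then show ?thesis
    by (simp add: sum.remove[OF finite assms(2)])
qed

lemma is_sos_sym_form_near_even_center: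
  assumes n: "n \<ge> 1" and near: "\<forall>lam\<in>partitions (2 * d). \<bar>c lam - even_center d lam\<bar> \<le> 2"
  shows "is_sos n d (sym_form (2 * d) n c)"
proof -
  define T where "T x = (\<Sum>rho\<in>even_partitions d. pprod n rho x)" for x
  define t where "t lam = (c lam - even_center d lam) / 2" for lam
  obtain mu nu where mu: "\<And>lam. lam \<in> partitions (2 * d) \<Longrightarrow> mu lam \<in> even_partitions d"
    and nu: "\<And>lam. lam \<in> partitions (2 * d) \<Longrightarrow> nu lam \<in> even_partitions d"
    and dominated: "\<And>lam n t. lam \<in> partitions (2 * d) \<Longrightarrow> n \<ge> 1 \<Longrightarrow> \<bar>t\<bar> \<le> 1 \<Longrightarrow>
      is_sos n d (\<lambda>x. pprod n (mu lam) x + pprod n (nu lam) x + 2 * t * pprod n lam x)"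
    by (rule even_partitions_dominate[of d]) blast
  \<comment> \<open>The two \<open>T\<close>-terms cancel the even partitions \<open>mu lam\<close>, \<open>nu lam\<close> used to dominate
    \<open>pprod n lam\<close>; each summand is \<open>(c lam - even_center d lam) * pprod n lam x + 2 * T x\<close>,
    and the \<open>2 * T\<close> parts add up to the centre.\<close>
  let ?summand = "\<lambda>lam x. (pprod n (mu lam) x + pprod n (nu lam) x + 2 * t lam * pprod n lam x)
      + (T x - pprod n (mu lam) x) + (T x - pprod n (nu lam) x)"
  have "is_sos n d (\<lambda>x. \<Sum>lam\<in>partitions (2 * d). ?summand lam x)"
    using n near unfolding T_def
    by (intro is_sos_sum is_sos_add dominated is_sos_even_partitions_remove mu nu)
      (auto simp: t_def finite_partitions)
  moreover have "(\<Sum>lam\<in>partitions (2 * d). ?summand lam x) = sym_form (2 * d) n c x" for x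
  proof -
    have "2 * t lam = c lam - even_center d lam" for lam
      by (simp add: t_def)
    then have "(\<Sum>lam\<in>partitions (2 * d). ?summand lam x)
        = (\<Sum>lam\<in>partitions (2 * d). (c lam - even_center d lam) * pprod n lam x)
          + 2 * real (card (partitions (2 * d))) * T x"
      by (simp add: sum.distrib)
    also have "\<dots> = sym_form (2 * d) n c x"
      by (simp add: sym_form_even_center[symmetric] T_def sym_form_def left_diff_distrib sum_subtractf)
    finally show ?thesis .
  qed
  ultimately show ?thesis by simp
qed

lemma sym_form_cmult: "sym_form k n (\<lambda>lam. t * c lam) = (\<lambda>x. t * sym_form k n c x)"
  by (simp add: fun_eq_iff sym_form_def sum_distrib_left mult.assoc)

lemma coeff_space_cmult: "c \<in> coeff_space k \<Longrightarrow> (\<lambda>lam. t * c lam) \<in> coeff_space k"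
  by (simp add: coeff_space_def)

lemma is_cone_in_Pcone: "is_cone_in (Pcone d)"
  unfolding is_cone_in_def Pcone_def nonneg_fn_def
  by (auto simp: sym_form_cmult coeff_space_cmult)

lemma is_cone_in_Scone: "is_cone_in (Scone d)"
  unfolding is_cone_in_def Scone_def
  by (auto simp: sym_form_cmult coeff_space_cmult is_sos_cmult)

lemma Scone_subset_Pcone: "Scone d \<subseteq> Pcone d"
  by (auto simp: Scone_def Pcone_def is_sos_imp_nonneg)

lemma full_dimensional_mono: "full_dimensional k C \<Longrightarrow> C \<subseteq> D \<Longrightarrow> full_dimensional k D"
  unfolding full_dimensional_def by blast

lemma full_dimensional_Scone: "full_dimensional (2 * d) (Scone d)"
proof -
  have "c \<in> Scone d" if "c \<in> coeff_space (2 * d)"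
    and near: "\<forall>lam\<in>partitions (2 * d). \<bar>c lam - even_center d lam\<bar> < 2" for c
  proof -
    have "\<forall>lam\<in>partitions (2 * d). \<bar>c lam - even_center d lam\<bar> \<le> 2"
      using near less_imp_le by blast
    then show ?thesis
      using that(1) is_sos_sym_form_near_even_center[of _ d c] by (simp add: Scone_def)
  qed
  moreover from this have "even_center d \<in> Scone d"
    by (simp add: even_center_in_coeff_space)
  ultimately show ?thesis
    unfolding full_dimensional_def by (intro bexI[of _ "even_center d"] exI[of _ 2]) auto
qed

theorem theorem1p2:
  fixes d :: nat
  shows "is_cone_in (Pcone d) \<and> full_dimensional (2*d) (Pcone d) \<and>
         is_cone_in (Scone d) \<and> full_dimensional (2*d) (Scone d)"
  using is_cone_in_Pcone is_cone_in_Scone full_dimensional_Scone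
    full_dimensional_mono[OF full_dimensional_Scone Scone_subset_Pcone]
  by blast

end
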